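(* Let $k$ be a commutative ring, $P$ a $k$-plethory, $A$ a $P$-ring, and $I,J$ $P$-ideals of $A$. Then $IJ$ is a $P$-ideal.
   Context: All rings are commutative with unit. A $k$-$k$-biring is a commutative $k$-algebra with coaddition $\Delta^+$, comultiplication $\Delta^\times$, counits $\varepsilon^+,\varepsilon^\times$, antipode and $\beta\colon k\to\mathrm{Hom}_{k\text{-alg}}(S,k)$, making it a commutative $k$-algebra object in the opposite of the category of commutative $k$-algebras. The composition product $S\odot_kR$ is the $k$-algebra generated by $s\odot r$, ring-linear in $s$ with $c\odot r=c$, with $s\odot(r+r')$, $s\odot(rr')$, $s\odot c$ expanded via $\Delta^+(s),\Delta^\times(s),\beta(c)(s)$. A $k$-plethory is a monoid $(P,\circ,e)$ in $k$-$k$-birings under $\odot_k$ with unit $k[e]$. A $P$-ring is a commutative $k$-algebra with an associative unital action $P\odot_kR\to R$. An ideal $I$ of a $P$-ring $R$ is a $P$-ideal if there is a $P$-action on $R/I$ making $R\to R/I$ a morphism of $P$-rings. *)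

theory Defs
  imports "HOL-Algebra.QuotRing" "HOL-Algebra.Ideal_Product"
begin

definition kalg :: "'k ring \<Rightarrow> 'r ring \<Rightarrow> ('k \<Rightarrow> 'r) \<Rightarrow> bool" where
  "kalg k R eta \<longleftrightarrow> cring k \<and> cring R \<and> eta \<in> ring_hom k R"

definition kalg_hom :: "'k ring \<Rightarrow> 'r ring \<Rightarrow> ('k \<Rightarrow> 'r) \<Rightarrow> 's ring \<Rightarrow> ('k \<Rightarrow> 's)
    \<Rightarrow> ('r \<Rightarrow> 's) \<Rightarrow> bool" where
  "kalg_hom k R etaR S etaS h \<longleftrightarrow>
     h \<in> ring_hom R S \<and> (\<forall>c \<in> carrier k. h (etaR c) = etaS c)"

definition rsum :: "('r, 'm) ring_scheme \<Rightarrow> 'r list \<Rightarrow> 'r" where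
  "rsum R xs = foldr (\<lambda>x acc. x \<oplus>\<^bsub>R\<^esub> acc) xs \<zero>\<^bsub>R\<^esub>"

text \<open>An element of the n-fold tensor power of the k-algebra (P, eta) over k
is represented by a formal k-linear combination of pure tensors, i.e. by a
list of pairs (c, [p1,...,pn]) standing for the sum of c (p1 x ... x pn).
Two such representatives denote the same tensor iff they are related by
teq, the smallest equivalence relation making formal sums a free k-module
on words and imposing k-multilinearity in each tensor slot.\<close>

type_synonym ('k, 'p) fsum = "('k \<times> 'p list) list"

definition fs_wf :: "'k ring \<Rightarrow> 'p ring \<Rightarrow> nat \<Rightarrow> ('k, 'p) fsum \<Rightarrow> bool" where
  "fs_wf k P n x \<longleftrightarrow>
     (\<forall>(c, w) \<in> set x. c \<in> carrier k \<and> length w = n \<and> set w \<subseteq> carrier P)"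

inductive teq :: "'k ring \<Rightarrow> 'p ring \<Rightarrow> ('k \<Rightarrow> 'p) \<Rightarrow> nat
    \<Rightarrow> ('k, 'p) fsum \<Rightarrow> ('k, 'p) fsum \<Rightarrow> bool"
  for k P eta n where
  refl: "fs_wf k P n x \<Longrightarrow> teq k P eta n x x"
| sym: "teq k P eta n x y \<Longrightarrow> teq k P eta n y x"
| trans: "teq k P eta n x y \<Longrightarrow> teq k P eta n y z \<Longrightarrow> teq k P eta n x z"
| app: "teq k P eta n x x' \<Longrightarrow> teq k P eta n y y' \<Longrightarrow> teq k P eta n (x @ y) (x' @ y')"
| swap: "fs_wf k P n x \<Longrightarrow> fs_wf k P n y \<Longrightarrow> teq k P eta n (x @ y) (y @ x)"
| zero: "fs_wf k P n [(\<zero>\<^bsub>k\<^esub>, w)] \<Longrightarrow> teq k P eta n [(\<zero>\<^bsub>k\<^esub>, w)] []"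
| merge: "fs_wf k P n [(c, w), (d, w)] \<Longrightarrow>
           teq k P eta n [(c, w), (d, w)] [(c \<oplus>\<^bsub>k\<^esub> d, w)]"
| addl: "fs_wf k P n [(c, xs @ [s] @ ys), (c, xs @ [t] @ ys)] \<Longrightarrow>
           teq k P eta n [(c, xs @ [s \<oplus>\<^bsub>P\<^esub> t] @ ys)] [(c, xs @ [s] @ ys), (c, xs @ [t] @ ys)]"
| scal: "d \<in> carrier k \<Longrightarrow> fs_wf k P n [(c, xs @ [s] @ ys)] \<Longrightarrow>
           teq k P eta n [(c, xs @ [eta d \<otimes>\<^bsub>P\<^esub> s] @ ys)] [(c \<otimes>\<^bsub>k\<^esub> d, xs @ [s] @ ys)]"

definition fs_mult :: "'k ring \<Rightarrow> 'p ring \<Rightarrow> ('k, 'p) fsum \<Rightarrow> ('k, 'p) fsum \<Rightarrow> ('k, 'p) fsum" where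
  "fs_mult k P x y =
     concat (map (\<lambda>(c, v). map (\<lambda>(d, w). (c \<otimes>\<^bsub>k\<^esub> d, map2 (\<lambda>a b. a \<otimes>\<^bsub>P\<^esub> b) v w)) y) x)"

text \<open>A "setoid algebra": k-algebra operations on representatives together
with the equality relation on representatives.\<close>

record ('k, 'a) salg =
  s_add :: "'a \<Rightarrow> 'a \<Rightarrow> 'a"
  s_mul :: "'a \<Rightarrow> 'a \<Rightarrow> 'a"
  s_zero :: 'a
  s_one :: 'a
  s_eta :: "'k \<Rightarrow> 'a"
  s_eq :: "'a \<Rightarrow> 'a \<Rightarrow> bool"

definition s_sum :: "('k, 'a) salg \<Rightarrow> 'a list \<Rightarrow> 'a" where
  "s_sum A xs = foldr (s_add A) xs (s_zero A)"

definition tpow :: "'k ring \<Rightarrow> 'p ring \<Rightarrow> ('k \<Rightarrow> 'p) \<Rightarrow> nat \<Rightarrow> ('k, ('k, 'p) fsum) salg" where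
  "tpow k P eta n =
    \<lparr> s_add = (@), s_mul = fs_mult k P, s_zero = [],
      s_one = [(\<one>\<^bsub>k\<^esub>, replicate n \<one>\<^bsub>P\<^esub>)],
      s_eta = (\<lambda>c. [(c, replicate n \<one>\<^bsub>P\<^esub>)]),
      s_eq = teq k P eta n \<rparr>"

text \<open>The universal i-th point P -> P^{(x) n}, f |-> 1 x .. x f x .. x 1.\<close>

definition upt :: "'k ring \<Rightarrow> 'p ring \<Rightarrow> nat \<Rightarrow> nat \<Rightarrow> 'p \<Rightarrow> ('k, 'p) fsum" where
  "upt k P n i = (\<lambda>f. [(\<one>\<^bsub>k\<^esub>, (replicate n \<one>\<^bsub>P\<^esub>)[i := f])])"

text \<open>Co-structure data of a k-k-biring S: coaddition, comultiplication
(valued in the tensor square), additive and multiplicative counits, antipode,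
and co-k-linear structure beta : k -> Hom_{k-alg}(S,k).\<close>

record ('k, 'p) biring_data =
  dplus :: "'p \<Rightarrow> ('k, 'p) fsum"
  dtimes :: "'p \<Rightarrow> ('k, 'p) fsum"
  eplus :: "'p \<Rightarrow> 'k"
  etimes :: "'p \<Rightarrow> 'k"
  antip :: "'p \<Rightarrow> 'p"
  beta :: "'k \<Rightarrow> 'p \<Rightarrow> 'k"

text \<open>W_S(A) = Hom_{k-alg}(S, A), with the k-algebra structure induced by the
co-structure of S: (x+y)(f) = sum c x(f') y(f'') over Delta+(f) = sum c f' x f'', etc.\<close>

definition Wsalg :: "'p ring \<Rightarrow> ('k, 'p) biring_data \<Rightarrow> ('k, 'a) salg \<Rightarrow> ('k, 'p \<Rightarrow> 'a) salg" where
  "Wsalg P B A =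
    \<lparr> s_add = (\<lambda>x y f. s_sum A (map (\<lambda>(c, w). s_mul A (s_eta A c) (s_mul A (x (w ! 0)) (y (w ! 1))))
                                  (dplus B f))),
      s_mul = (\<lambda>x y f. s_sum A (map (\<lambda>(c, w). s_mul A (s_eta A c) (s_mul A (x (w ! 0)) (y (w ! 1))))
                                  (dtimes B f))),
      s_zero = (\<lambda>f. s_eta A (eplus B f)),
      s_one = (\<lambda>f. s_eta A (etimes B f)),
      s_eta = (\<lambda>c f. s_eta A (beta B c f)),
      s_eq = (\<lambda>x y. \<forall>f \<in> carrier P. s_eq A (x f) (y f)) \<rparr>"

definition Wneg :: "('k, 'p) biring_data \<Rightarrow> ('p \<Rightarrow> 'a) \<Rightarrow> 'p \<Rightarrow> 'a" where
  "Wneg B x = (\<lambda>f. x (antip B f))"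

definition fs_kalg_map :: "'k ring \<Rightarrow> 'p ring \<Rightarrow> ('k \<Rightarrow> 'p) \<Rightarrow> nat \<Rightarrow> ('p \<Rightarrow> ('k, 'p) fsum) \<Rightarrow> bool" where
  "fs_kalg_map k P eta n \<phi> \<longleftrightarrow>
     (\<forall>s \<in> carrier P. fs_wf k P n (\<phi> s)) \<and>
     (\<forall>s \<in> carrier P. \<forall>t \<in> carrier P.
        teq k P eta n (\<phi> (s \<oplus>\<^bsub>P\<^esub> t)) (\<phi> s @ \<phi> t) \<and>
        teq k P eta n (\<phi> (s \<otimes>\<^bsub>P\<^esub> t)) (fs_mult k P (\<phi> s) (\<phi> t))) \<and>
     teq k P eta n (\<phi> \<one>\<^bsub>P\<^esub>) [(\<one>\<^bsub>k\<^esub>, replicate n \<one>\<^bsub>P\<^esub>)] \<and>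
     (\<forall>c \<in> carrier k. teq k P eta n (\<phi> (eta c)) [(c, replicate n \<one>\<^bsub>P\<^esub>)])"

text \<open>The co-ring axioms are the k-algebra axioms of W_P(A), checked (Yoneda)
at the universal points in the tensor powers of P.\<close>

definition biring :: "'k ring \<Rightarrow> 'p ring \<Rightarrow> ('k \<Rightarrow> 'p) \<Rightarrow> ('k, 'p) biring_data \<Rightarrow> bool" where
  "biring k P eta B \<longleftrightarrow>
     kalg k P eta \<and>
     fs_kalg_map k P eta 2 (dplus B) \<and>
     fs_kalg_map k P eta 2 (dtimes B) \<and>
     kalg_hom k P eta k id (eplus B) \<and>
     kalg_hom k P eta k id (etimes B) \<and>
     kalg_hom k P eta P eta (antip B) \<and>
     (\<forall>c \<in> carrier k. kalg_hom k P eta k id (beta B c)) \<and>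
     (let W1 = Wsalg P B (tpow k P eta 1);
          W2 = Wsalg P B (tpow k P eta 2);
          W3 = Wsalg P B (tpow k P eta 3);
          W0 = Wsalg P B (tpow k P eta 0);
          p = upt k P in
       s_eq W3 (s_add W3 (s_add W3 (p 3 0) (p 3 1)) (p 3 2))
               (s_add W3 (p 3 0) (s_add W3 (p 3 1) (p 3 2))) \<and>
       s_eq W2 (s_add W2 (p 2 0) (p 2 1)) (s_add W2 (p 2 1) (p 2 0)) \<and>
       s_eq W1 (s_add W1 (s_zero W1) (p 1 0)) (p 1 0) \<and>
       s_eq W1 (s_add W1 (Wneg B (p 1 0)) (p 1 0)) (s_zero W1) \<and>
       s_eq W3 (s_mul W3 (s_mul W3 (p 3 0) (p 3 1)) (p 3 2))
               (s_mul W3 (p 3 0) (s_mul W3 (p 3 1) (p 3 2))) \<and>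
       s_eq W2 (s_mul W2 (p 2 0) (p 2 1)) (s_mul W2 (p 2 1) (p 2 0)) \<and>
       s_eq W1 (s_mul W1 (s_one W1) (p 1 0)) (p 1 0) \<and>
       s_eq W3 (s_mul W3 (p 3 0) (s_add W3 (p 3 1) (p 3 2)))
               (s_add W3 (s_mul W3 (p 3 0) (p 3 1)) (s_mul W3 (p 3 0) (p 3 2))) \<and>
       (\<forall>c \<in> carrier k. \<forall>d \<in> carrier k.
          s_eq W0 (s_eta W0 (c \<oplus>\<^bsub>k\<^esub> d)) (s_add W0 (s_eta W0 c) (s_eta W0 d)) \<and>
          s_eq W0 (s_eta W0 (c \<otimes>\<^bsub>k\<^esub> d)) (s_mul W0 (s_eta W0 c) (s_eta W0 d))) \<and>
       s_eq W0 (s_eta W0 \<zero>\<^bsub>k\<^esub>) (s_zero W0) \<and>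
       s_eq W0 (s_eta W0 \<one>\<^bsub>k\<^esub>) (s_one W0))"

text \<open>A function act : P x R -> R, (f, r) |-> f(r), defines a k-algebra map
P (.) R -> R, f (.) r |-> f(r), iff it respects the defining relations of the
composition product.\<close>

definition pact :: "'k ring \<Rightarrow> 'p ring \<Rightarrow> ('k \<Rightarrow> 'p) \<Rightarrow> ('k, 'p) biring_data
    \<Rightarrow> 'r ring \<Rightarrow> ('k \<Rightarrow> 'r) \<Rightarrow> ('p \<Rightarrow> 'r \<Rightarrow> 'r) \<Rightarrow> bool" where
  "pact k P eta B R etaR act \<longleftrightarrow>
     (\<forall>f \<in> carrier P. \<forall>r \<in> carrier R. act f r \<in> carrier R) \<and>
     (\<forall>r \<in> carrier R. kalg_hom k P eta R etaR (\<lambda>f. act f r)) \<and>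
     (\<forall>f \<in> carrier P. \<forall>r \<in> carrier R. \<forall>r' \<in> carrier R.
        act f (r \<oplus>\<^bsub>R\<^esub> r') =
          rsum R (map (\<lambda>(c, w). etaR c \<otimes>\<^bsub>R\<^esub> act (w ! 0) r \<otimes>\<^bsub>R\<^esub> act (w ! 1) r') (dplus B f)) \<and>
        act f (r \<otimes>\<^bsub>R\<^esub> r') =
          rsum R (map (\<lambda>(c, w). etaR c \<otimes>\<^bsub>R\<^esub> act (w ! 0) r \<otimes>\<^bsub>R\<^esub> act (w ! 1) r') (dtimes B f))) \<and>
     (\<forall>f \<in> carrier P. \<forall>c \<in> carrier k. act f (etaR c) = etaR (beta B c f))"

text \<open>A k-plethory (P, cmp, e): a k-k-biring with a composition
P (.) P -> P, f (.) g |-> cmp f g, which is associative with unit e, such that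
the composition and the unit map k[e] -> P are maps of k-k-birings.
The biring structure on P (.) P is the one with W_{P(.)P} = W_P o W_P; the
composition is a biring map iff phi |-> (r |-> (s |-> phi(s o r))) is a map of
k-algebras W_P(A) -> W_P(W_P(A)), which (Yoneda) is checked at the universal
points.\<close>

definition Phi :: "('p \<Rightarrow> 'p \<Rightarrow> 'p) \<Rightarrow> ('p \<Rightarrow> 'a) \<Rightarrow> 'p \<Rightarrow> 'p \<Rightarrow> 'a" where
  "Phi cmp x = (\<lambda>r s. x (cmp s r))"

definition plethory :: "'k ring \<Rightarrow> 'p ring \<Rightarrow> ('k \<Rightarrow> 'p) \<Rightarrow> ('k, 'p) biring_data
    \<Rightarrow> ('p \<Rightarrow> 'p \<Rightarrow> 'p) \<Rightarrow> 'p \<Rightarrow> bool" where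
  "plethory k P eta B cmp e \<longleftrightarrow>
     biring k P eta B \<and>
     e \<in> carrier P \<and>
     pact k P eta B P eta cmp \<and>
     (\<forall>f \<in> carrier P. \<forall>g \<in> carrier P. \<forall>h \<in> carrier P. cmp (cmp f g) h = cmp f (cmp g h)) \<and>
     (\<forall>f \<in> carrier P. cmp e f = f \<and> cmp f e = f) \<and>
     teq k P eta 2 (dplus B e) [(\<one>\<^bsub>k\<^esub>, [e, \<one>\<^bsub>P\<^esub>]), (\<one>\<^bsub>k\<^esub>, [\<one>\<^bsub>P\<^esub>, e])] \<and>
     teq k P eta 2 (dtimes B e) [(\<one>\<^bsub>k\<^esub>, [e, e])] \<and>
     eplus B e = \<zero>\<^bsub>k\<^esub> \<and> etimes B e = \<one>\<^bsub>k\<^esub> \<and> antip B e = \<ominus>\<^bsub>P\<^esub> e \<and>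
     (\<forall>c \<in> carrier k. beta B c e = c) \<and>
     (let A2 = tpow k P eta 2; A0 = tpow k P eta 0;
          V2 = Wsalg P B A2; VV2 = Wsalg P B V2;
          V0 = Wsalg P B A0; VV0 = Wsalg P B V0;
          p = upt k P 2 in
       s_eq VV2 (Phi cmp (s_add V2 (p 0) (p 1))) (s_add VV2 (Phi cmp (p 0)) (Phi cmp (p 1))) \<and>
       s_eq VV2 (Phi cmp (s_mul V2 (p 0) (p 1))) (s_mul VV2 (Phi cmp (p 0)) (Phi cmp (p 1))) \<and>
       s_eq VV0 (Phi cmp (s_zero V0)) (s_zero VV0) \<and>
       s_eq VV0 (Phi cmp (s_one V0)) (s_one VV0) \<and>
       (\<forall>c \<in> carrier k. s_eq VV0 (Phi cmp (s_eta V0 c)) (s_eta VV0 c)))"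

definition pring :: "'k ring \<Rightarrow> 'p ring \<Rightarrow> ('k \<Rightarrow> 'p) \<Rightarrow> ('k, 'p) biring_data
    \<Rightarrow> ('p \<Rightarrow> 'p \<Rightarrow> 'p) \<Rightarrow> 'p \<Rightarrow> 'r ring \<Rightarrow> ('k \<Rightarrow> 'r) \<Rightarrow> ('p \<Rightarrow> 'r \<Rightarrow> 'r) \<Rightarrow> bool" where
  "pring k P eta B cmp e R etaR act \<longleftrightarrow>
     kalg k R etaR \<and>
     pact k P eta B R etaR act \<and>
     (\<forall>f \<in> carrier P. \<forall>g \<in> carrier P. \<forall>r \<in> carrier R. act (cmp f g) r = act f (act g r)) \<and>
     (\<forall>r \<in> carrier R. act e r = r)"

definition pring_hom :: "'k ring \<Rightarrow> 'p ring \<Rightarrow> 'r ring \<Rightarrow> ('k \<Rightarrow> 'r) \<Rightarrow> ('p \<Rightarrow> 'r \<Rightarrow> 'r)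
    \<Rightarrow> 's ring \<Rightarrow> ('k \<Rightarrow> 's) \<Rightarrow> ('p \<Rightarrow> 's \<Rightarrow> 's) \<Rightarrow> ('r \<Rightarrow> 's) \<Rightarrow> bool" where
  "pring_hom k P R etaR act S etaS act' h \<longleftrightarrow>
     kalg_hom k R etaR S etaS h \<and>
     (\<forall>f \<in> carrier P. \<forall>r \<in> carrier R. h (act f r) = act' f (h r))"

definition pideal :: "'k ring \<Rightarrow> 'p ring \<Rightarrow> ('k \<Rightarrow> 'p) \<Rightarrow> ('k, 'p) biring_data
    \<Rightarrow> ('p \<Rightarrow> 'p \<Rightarrow> 'p) \<Rightarrow> 'p \<Rightarrow> 'r ring \<Rightarrow> ('k \<Rightarrow> 'r) \<Rightarrow> ('p \<Rightarrow> 'r \<Rightarrow> 'r) \<Rightarrow> 'r set \<Rightarrow> bool" where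
  "pideal k P eta B cmp e R etaR act I \<longleftrightarrow>
     ideal I R \<and>
     (\<exists>act'. pring k P eta B cmp e (R Quot I) (\<lambda>c. I +>\<^bsub>R\<^esub> etaR c) act' \<and>
             pring_hom k P R etaR act (R Quot I) (\<lambda>c. I +>\<^bsub>R\<^esub> etaR c) act' (\<lambda>r. I +>\<^bsub>R\<^esub> r))"

end

theory Submission
  imports Defs
begin

text \<open>An ideal K of a P-ring A is a P-ideal iff every f \<in> P respects congruence modulo K,
  for then the action descends to A/K. For K = I J it suffices that f(s + x) - f(s) \<in> I J
  for x \<in> I J, and since this condition is additive in x, only x = i j needs checking.
  The coaddition gives f(s + i j) - f(s) = \<Sum> c f'(s) (f''(i j) - f''(0)), and the
  comultiplication, evaluated at i j, i 0, 0 j and 0 0, gives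
  f''(i j) - f''(0) = \<Sum> c (g'(i) - g'(0)) (g''(j) - g''(0)),
  which lies in I J because I and J are P-ideals.\<close>

lemma rsum_Nil [simp]: "rsum R [] = \<zero>\<^bsub>R\<^esub>"
  by (simp add: rsum_def)

lemma rsum_Cons [simp]: "rsum R (x # xs) = x \<oplus>\<^bsub>R\<^esub> rsum R xs"
  by (simp add: rsum_def)

lemma (in ring) rsum_closed:
  "(\<And>x. x \<in> set xs \<Longrightarrow> g x \<in> carrier R) \<Longrightarrow> rsum R (map g xs) \<in> carrier R"
  by (induction xs) auto

lemma (in ring) rsum_map_minus:
  assumes "\<And>x. x \<in> set xs \<Longrightarrow> g x \<in> carrier R \<and> g' x \<in> carrier R"
  shows "rsum R (map g xs) \<ominus> rsum R (map g' xs) = rsum R (map (\<lambda>x. g x \<ominus> g' x) xs)"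
  using assms
proof (induction xs)
  case Nil
  then show ?case by (simp add: minus_eq)
next
  case (Cons a xs)
  have "rsum R (map g xs) \<in> carrier R" "rsum R (map g' xs) \<in> carrier R"
    using Cons.prems by (auto intro: rsum_closed)
  moreover have "g a \<in> carrier R" "g' a \<in> carrier R"
    using Cons.prems by auto
  moreover have "(x \<oplus> y) \<ominus> (u \<oplus> v) = (x \<ominus> u) \<oplus> (y \<ominus> v)"
    if "x \<in> carrier R" "y \<in> carrier R" "u \<in> carrier R" "v \<in> carrier R" for x y u v
    using that by (simp add: a_minus_def minus_add a_ac)
  ultimately show ?case
    using Cons by simp
qed

lemma (in ideal) rsum_mem:
  "(\<And>x. x \<in> set xs \<Longrightarrow> g x \<in> I) \<Longrightarrow> rsum R (map g xs) \<in> I"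
  by (induction xs) (auto simp: a_closed)

lemma (in ring_hom_ring) hom_rsum:
  "(\<And>x. x \<in> set xs \<Longrightarrow> g x \<in> carrier R) \<Longrightarrow> h (rsum R (map g xs)) = rsum S (map (\<lambda>x. h (g x)) xs)"
  by (induction xs) (auto simp: R.rsum_closed)

lemma fs_wf_2_memD:
  assumes "fs_wf k P 2 D" and "(c, w) \<in> set D"
  shows "c \<in> carrier k" and "w ! 0 \<in> carrier P" and "w ! 1 \<in> carrier P"
proof -
  have "c \<in> carrier k \<and> length w = 2 \<and> set w \<subseteq> carrier P"
    using assms unfolding fs_wf_def by fastforce
  then show "c \<in> carrier k" "w ! 0 \<in> carrier P" "w ! 1 \<in> carrier P"
    by (auto intro: nth_mem)
qed

definition tensor_eval :: "('r, 'm) ring_scheme \<Rightarrow> ('k \<Rightarrow> 'r) \<Rightarrow> ('p \<Rightarrow> 'r \<Rightarrow> 'r)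
    \<Rightarrow> ('k, 'p) fsum \<Rightarrow> 'r \<Rightarrow> 'r \<Rightarrow> 'r" where
  "tensor_eval R etaR act D r r' =
     rsum R (map (\<lambda>(c, w). etaR c \<otimes>\<^bsub>R\<^esub> act (w ! 0) r \<otimes>\<^bsub>R\<^esub> act (w ! 1) r') D)"

lemma pact_tensor_eval_iff:
  "pact k P eta B R etaR act \<longleftrightarrow>
     (\<forall>f \<in> carrier P. \<forall>r \<in> carrier R. act f r \<in> carrier R) \<and>
     (\<forall>r \<in> carrier R. kalg_hom k P eta R etaR (\<lambda>f. act f r)) \<and>
     (\<forall>f \<in> carrier P. \<forall>r \<in> carrier R. \<forall>r' \<in> carrier R.
        act f (r \<oplus>\<^bsub>R\<^esub> r') = tensor_eval R etaR act (dplus B f) r r' \<and>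
        act f (r \<otimes>\<^bsub>R\<^esub> r') = tensor_eval R etaR act (dtimes B f) r r') \<and>
     (\<forall>f \<in> carrier P. \<forall>c \<in> carrier k. act f (etaR c) = etaR (beta B c f))"
  by (simp add: pact_def tensor_eval_def)

locale pring_over_plethory =
  fixes k :: "'k ring" and P :: "'p ring" and eta :: "'k \<Rightarrow> 'p"
    and B :: "('k, 'p) biring_data" and cmp :: "'p \<Rightarrow> 'p \<Rightarrow> 'p" and e :: 'p
    and A :: "'a ring" and etaA :: "'k \<Rightarrow> 'a" and act :: "'p \<Rightarrow> 'a \<Rightarrow> 'a"
  assumes plethory: "plethory k P eta B cmp e"
    and pring: "pring k P eta B cmp e A etaA act"
begin

lemma biring_P: "biring k P eta B"
  using plethory by (simp add: plethory_def)

lemma kalg_P: "kalg k P eta"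
  using biring_P by (simp add: biring_def)

lemma kalg_A: "kalg k A etaA"
  using pring by (simp add: pring_def)

lemma pact_A: "pact k P eta B A etaA act"
  using pring by (simp add: pring_def)

sublocale P: cring P
  using kalg_P by (simp add: kalg_def)

sublocale A: cring A
  using kalg_A by (simp add: kalg_def)

lemma cring_k: "cring k"
  using kalg_A by (simp add: kalg_def)

lemma eta_hom: "eta \<in> ring_hom k P"
  using kalg_P by (simp add: kalg_def)

lemma etaA_hom: "etaA \<in> ring_hom k A"
  using kalg_A by (simp add: kalg_def)

lemma etaA_closed [simp]: "c \<in> carrier k \<Longrightarrow> etaA c \<in> carrier A"
  using etaA_hom by (rule ring_hom_closed)

lemma e_closed: "e \<in> carrier P"
  using plethory by (simp add: plethory_def)

lemma cmp_closed: "f \<in> carrier P \<Longrightarrow> g \<in> carrier P \<Longrightarrow> cmp f g \<in> carrier P"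
  using plethory by (simp add: plethory_def pact_def)

lemma dplus_wf: "f \<in> carrier P \<Longrightarrow> fs_wf k P 2 (dplus B f)"
  using biring_P by (simp add: biring_def fs_kalg_map_def)

lemma dtimes_wf: "f \<in> carrier P \<Longrightarrow> fs_wf k P 2 (dtimes B f)"
  using biring_P by (simp add: biring_def fs_kalg_map_def)

lemma act_closed [simp]: "f \<in> carrier P \<Longrightarrow> r \<in> carrier A \<Longrightarrow> act f r \<in> carrier A"
  using pact_A by (simp add: pact_def)

lemma act_hom: "r \<in> carrier A \<Longrightarrow> (\<lambda>f. act f r) \<in> ring_hom P A"
  using pact_A by (simp add: pact_def kalg_hom_def)

lemma act_eta: "c \<in> carrier k \<Longrightarrow> r \<in> carrier A \<Longrightarrow> act (eta c) r = etaA c"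
  using pact_A by (simp add: pact_def kalg_hom_def)

lemma act_add:
  "f \<in> carrier P \<Longrightarrow> r \<in> carrier A \<Longrightarrow> r' \<in> carrier A \<Longrightarrow>
    act f (r \<oplus>\<^bsub>A\<^esub> r') = tensor_eval A etaA act (dplus B f) r r'"
  using pact_A by (simp add: pact_tensor_eval_iff)

lemma act_mult:
  "f \<in> carrier P \<Longrightarrow> r \<in> carrier A \<Longrightarrow> r' \<in> carrier A \<Longrightarrow>
    act f (r \<otimes>\<^bsub>A\<^esub> r') = tensor_eval A etaA act (dtimes B f) r r'"
  using pact_A by (simp add: pact_tensor_eval_iff)

lemma act_etaA: "f \<in> carrier P \<Longrightarrow> c \<in> carrier k \<Longrightarrow> act f (etaA c) = etaA (beta B c f)"
  using pact_A by (simp add: pact_def)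

lemma act_cmp:
  "f \<in> carrier P \<Longrightarrow> g \<in> carrier P \<Longrightarrow> r \<in> carrier A \<Longrightarrow> act (cmp f g) r = act f (act g r)"
  using pring by (simp add: pring_def)

lemma act_e: "r \<in> carrier A \<Longrightarrow> act e r = r"
  using pring by (simp add: pring_def)

lemma tensor_term_closed:
  assumes "fs_wf k P 2 D" and "t \<in> set D" and "u \<in> carrier A" and "z \<in> carrier A"
  shows "(case t of (c, w) \<Rightarrow> etaA c \<otimes>\<^bsub>A\<^esub> act (w ! 0) u \<otimes>\<^bsub>A\<^esub> act (w ! 1) z) \<in> carrier A"
proof (cases t)
  case (Pair c w)
  then show ?thesis
    using fs_wf_2_memD[OF assms(1), of c w] assms(2-4) by simp
qed

lemma tensor_eval_diff_right_mem:
  assumes D: "fs_wf k P 2 D" and K: "ideal K A"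
    and x: "x \<in> carrier A" and y: "y \<in> carrier A" "y' \<in> carrier A"
    and diff: "\<And>f. f \<in> carrier P \<Longrightarrow> act f y \<ominus>\<^bsub>A\<^esub> act f y' \<in> K"
  shows "tensor_eval A etaA act D x y \<ominus>\<^bsub>A\<^esub> tensor_eval A etaA act D x y' \<in> K"
proof -
  interpret K: ideal K A by (rule K)
  let ?t = "\<lambda>z (c, w). etaA c \<otimes>\<^bsub>A\<^esub> act (w ! 0) x \<otimes>\<^bsub>A\<^esub> act (w ! 1) z"
  have "tensor_eval A etaA act D x y \<ominus>\<^bsub>A\<^esub> tensor_eval A etaA act D x y'
      = rsum A (map (\<lambda>t. ?t y t \<ominus>\<^bsub>A\<^esub> ?t y' t) D)"
    unfolding tensor_eval_def
    by (rule A.rsum_map_minus) (blast intro: tensor_term_closed[OF D] x y)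
  also have "\<dots> \<in> K"
  proof (rule K.rsum_mem)
    fix t assume "t \<in> set D"
    moreover obtain c w where t: "t = (c, w)"
      by (cases t)
    ultimately have cw: "(c, w) \<in> set D"
      by simp
    note cw = fs_wf_2_memD[OF D cw]
    have "?t y t \<ominus>\<^bsub>A\<^esub> ?t y' t
      = (etaA c \<otimes>\<^bsub>A\<^esub> act (w ! 0) x) \<otimes>\<^bsub>A\<^esub> (act (w ! 1) y \<ominus>\<^bsub>A\<^esub> act (w ! 1) y')"
      unfolding t prod.case
      using etaA_closed[OF cw(1)] act_closed[OF cw(2) x] act_closed[OF cw(3) y(1)]
        act_closed[OF cw(3) y(2)] by algebra
    moreover have "(etaA c \<otimes>\<^bsub>A\<^esub> act (w ! 0) x) \<otimes>\<^bsub>A\<^esub> (act (w ! 1) y \<ominus>\<^bsub>A\<^esub> act (w ! 1) y') \<in> K"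
      using cw x by (simp add: K.I_l_closed diff)
    ultimately show "?t y t \<ominus>\<^bsub>A\<^esub> ?t y' t \<in> K"
      by (simp only:)
  qed
  finally show ?thesis .
qed

lemma tensor_eval_second_diff_mem:
  assumes D: "fs_wf k P 2 D" and I: "ideal I A" and J: "ideal J A"
    and x: "x \<in> carrier A" "x' \<in> carrier A" and y: "y \<in> carrier A" "y' \<in> carrier A"
    and diff_I: "\<And>f. f \<in> carrier P \<Longrightarrow> act f x \<ominus>\<^bsub>A\<^esub> act f x' \<in> I"
    and diff_J: "\<And>f. f \<in> carrier P \<Longrightarrow> act f y \<ominus>\<^bsub>A\<^esub> act f y' \<in> J"
  shows "tensor_eval A etaA act D x y \<ominus>\<^bsub>A\<^esub> tensor_eval A etaA act D x y'
    \<ominus>\<^bsub>A\<^esub> (tensor_eval A etaA act D x' y \<ominus>\<^bsub>A\<^esub> tensor_eval A etaA act D x' y') \<in> I \<cdot>\<^bsub>A\<^esub> J"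
proof -
  interpret IJ: ideal "I \<cdot>\<^bsub>A\<^esub> J" A by (rule A.ideal_prod_is_ideal[OF I J])
  let ?t = "\<lambda>u z (c, w). etaA c \<otimes>\<^bsub>A\<^esub> act (w ! 0) u \<otimes>\<^bsub>A\<^esub> act (w ! 1) z"
  have "tensor_eval A etaA act D x y \<ominus>\<^bsub>A\<^esub> tensor_eval A etaA act D x y'
      \<ominus>\<^bsub>A\<^esub> (tensor_eval A etaA act D x' y \<ominus>\<^bsub>A\<^esub> tensor_eval A etaA act D x' y')
    = rsum A (map (\<lambda>t. ?t x y t \<ominus>\<^bsub>A\<^esub> ?t x y' t \<ominus>\<^bsub>A\<^esub> (?t x' y t \<ominus>\<^bsub>A\<^esub> ?t x' y' t)) D)"
  proof -
    have diff_x: "tensor_eval A etaA act D u y \<ominus>\<^bsub>A\<^esub> tensor_eval A etaA act D u y'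
        = rsum A (map (\<lambda>t. ?t u y t \<ominus>\<^bsub>A\<^esub> ?t u y' t) D)" if "u \<in> carrier A" for u
      unfolding tensor_eval_def
      by (rule A.rsum_map_minus) (blast intro: tensor_term_closed[OF D] that y)
    show ?thesis
      unfolding diff_x[OF x(1)] diff_x[OF x(2)]
      by (rule A.rsum_map_minus) (blast intro: A.minus_closed tensor_term_closed[OF D] x y)
  qed
  also have "\<dots> \<in> I \<cdot>\<^bsub>A\<^esub> J"
  proof (rule IJ.rsum_mem)
    fix t assume "t \<in> set D"
    moreover obtain c w where t: "t = (c, w)"
      by (cases t)
    ultimately have cw: "(c, w) \<in> set D"
      by simp
    note cw = fs_wf_2_memD[OF D cw]
    have "?t x y t \<ominus>\<^bsub>A\<^esub> ?t x y' t \<ominus>\<^bsub>A\<^esub> (?t x' y t \<ominus>\<^bsub>A\<^esub> ?t x' y' t)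
        = etaA c \<otimes>\<^bsub>A\<^esub> ((act (w ! 0) x \<ominus>\<^bsub>A\<^esub> act (w ! 0) x') \<otimes>\<^bsub>A\<^esub> (act (w ! 1) y \<ominus>\<^bsub>A\<^esub> act (w ! 1) y'))"
      unfolding t prod.case
      using etaA_closed[OF cw(1)] act_closed[OF cw(2) x(1)] act_closed[OF cw(2) x(2)]
        act_closed[OF cw(3) y(1)] act_closed[OF cw(3) y(2)] by algebra
    moreover have "(act (w ! 0) x \<ominus>\<^bsub>A\<^esub> act (w ! 0) x') \<otimes>\<^bsub>A\<^esub> (act (w ! 1) y \<ominus>\<^bsub>A\<^esub> act (w ! 1) y')
        \<in> I \<cdot>\<^bsub>A\<^esub> J"
      using diff_I diff_J cw by (intro ideal_prod.prod)
    ultimately show "?t x y t \<ominus>\<^bsub>A\<^esub> ?t x y' t \<ominus>\<^bsub>A\<^esub> (?t x' y t \<ominus>\<^bsub>A\<^esub> ?t x' y' t) \<in> I \<cdot>\<^bsub>A\<^esub> J"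
      using cw by (simp only:) (simp add: IJ.I_l_closed)
  qed
  finally show ?thesis .
qed

lemma tensor_eval_hom:
  fixes Q :: "'q ring" and h :: "'a \<Rightarrow> 'q" and act' :: "'p \<Rightarrow> 'q \<Rightarrow> 'q"
  assumes Q: "ring Q" and h: "h \<in> ring_hom A Q"
    and act': "\<And>f r. f \<in> carrier P \<Longrightarrow> r \<in> carrier A \<Longrightarrow> act' f (h r) = h (act f r)"
    and D: "fs_wf k P 2 D" and r: "r \<in> carrier A" "r' \<in> carrier A"
  shows "h (tensor_eval A etaA act D r r') = tensor_eval Q (\<lambda>c. h (etaA c)) act' D (h r) (h r')"
proof -
  interpret h: ring_hom_ring A Q h
    using A.ring_axioms Q h by (rule ring_hom_ringI2)
  let ?t = "\<lambda>(c, w). etaA c \<otimes>\<^bsub>A\<^esub> act (w ! 0) r \<otimes>\<^bsub>A\<^esub> act (w ! 1) r'"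
  let ?t' = "\<lambda>(c, w). h (etaA c) \<otimes>\<^bsub>Q\<^esub> act' (w ! 0) (h r) \<otimes>\<^bsub>Q\<^esub> act' (w ! 1) (h r')"
  have "h (rsum A (map ?t D)) = rsum Q (map (\<lambda>t. h (?t t)) D)"
    by (rule h.hom_rsum) (blast intro: tensor_term_closed[OF D] r)
  also have "\<dots> = rsum Q (map ?t' D)"
  proof (intro arg_cong[where f = "rsum Q"] map_cong[OF HOL.refl])
    fix t assume "t \<in> set D"
    moreover obtain c w where t: "t = (c, w)"
      by (cases t)
    ultimately show "h (?t t) = ?t' t"
      using fs_wf_2_memD[OF D, of c w] r by (simp add: act')
  qed
  finally show ?thesis
    unfolding tensor_eval_def .
qed

lemma pact_surj_image:
  fixes Q :: "'q ring" and h :: "'a \<Rightarrow> 'q" and act' :: "'p \<Rightarrow> 'q \<Rightarrow> 'q"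
  assumes Q: "ring Q" and h: "h \<in> ring_hom A Q" and surj: "h ` carrier A = carrier Q"
    and act': "\<And>f r. f \<in> carrier P \<Longrightarrow> r \<in> carrier A \<Longrightarrow> act' f (h r) = h (act f r)"
  shows "pact k P eta B Q (\<lambda>c. h (etaA c)) act'"
  unfolding pact_tensor_eval_iff
proof (intro conjI ballI)
  fix f X assume f: "f \<in> carrier P" and "X \<in> carrier Q"
  then obtain r where r: "r \<in> carrier A" and X: "X = h r"
    using surj by blast
  show "act' f X \<in> carrier Q"
    using f r h by (simp add: X act' ring_hom_closed)
next
  fix X assume "X \<in> carrier Q"
  then obtain r where r: "r \<in> carrier A" and X: "X = h r"
    using surj by blast
  have "(\<lambda>f. act' f X) \<in> ring_hom P Q"
    using P.ring_hom_restrict[OF ring_hom_trans[OF act_hom[OF r] h]] by (simp add: X act' r)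
  then show "kalg_hom k P eta Q (\<lambda>c. h (etaA c)) (\<lambda>f. act' f X)"
    using ring_hom_closed[OF eta_hom] by (simp add: kalg_hom_def X act' r act_eta)
next
  fix f X Y assume f: "f \<in> carrier P" and "X \<in> carrier Q" "Y \<in> carrier Q"
  then obtain r r' where r: "r \<in> carrier A" "r' \<in> carrier A" and XY: "X = h r" "Y = h r'"
    using surj by (metis imageE)
  show "act' f (X \<oplus>\<^bsub>Q\<^esub> Y) = tensor_eval Q (\<lambda>c. h (etaA c)) act' (dplus B f) X Y"
    using f r h by (simp add: XY act' act_add dplus_wf tensor_eval_hom[OF Q h act'] flip: ring_hom_add)
  show "act' f (X \<otimes>\<^bsub>Q\<^esub> Y) = tensor_eval Q (\<lambda>c. h (etaA c)) act' (dtimes B f) X Y"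
    using f r h by (simp add: XY act' act_mult dtimes_wf tensor_eval_hom[OF Q h act'] flip: ring_hom_mult)
next
  fix f c assume "f \<in> carrier P" "c \<in> carrier k"
  then show "act' f (h (etaA c)) = h (etaA (beta B c f))"
    by (simp add: act' act_etaA)
qed

lemma pring_surj_image:
  fixes Q :: "'q ring" and h :: "'a \<Rightarrow> 'q" and act' :: "'p \<Rightarrow> 'q \<Rightarrow> 'q"
  assumes Q: "cring Q" and h: "h \<in> ring_hom A Q" and surj: "h ` carrier A = carrier Q"
    and act': "\<And>f r. f \<in> carrier P \<Longrightarrow> r \<in> carrier A \<Longrightarrow> act' f (h r) = h (act f r)"
  shows "pring k P eta B cmp e Q (\<lambda>c. h (etaA c)) act'"
proof -
  have "kalg k Q (\<lambda>c. h (etaA c))"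
    using cring_k Q ring_hom_trans[OF etaA_hom h] by (simp add: kalg_def comp_def)
  moreover have "pact k P eta B Q (\<lambda>c. h (etaA c)) act'"
    using cring.axioms(1)[OF Q] h surj act' by (rule pact_surj_image)
  moreover have "act' (cmp f g) X = act' f (act' g X)"
    if "f \<in> carrier P" "g \<in> carrier P" "X \<in> carrier Q" for f g X
  proof -
    obtain r where "r \<in> carrier A" "X = h r"
      using surj \<open>X \<in> carrier Q\<close> by blast
    with that show ?thesis
      by (simp add: act' act_cmp cmp_closed)
  qed
  moreover have "act' e X = X" if "X \<in> carrier Q" for X
  proof -
    obtain r where "r \<in> carrier A" "X = h r"
      using surj \<open>X \<in> carrier Q\<close> by blast
    then show ?thesis
      by (simp add: act' act_e e_closed)
  qed
  ultimately show ?thesis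
    by (simp add: pring_def)
qed

definition act_respects :: "'a set \<Rightarrow> bool" where
  "act_respects K \<longleftrightarrow> (\<forall>f \<in> carrier P. \<forall>r \<in> carrier A. \<forall>s \<in> carrier A.
     r \<ominus>\<^bsub>A\<^esub> s \<in> K \<longrightarrow> act f r \<ominus>\<^bsub>A\<^esub> act f s \<in> K)"

lemma act_respects_if_pideal:
  assumes "pideal k P eta B cmp e A etaA act K"
  shows "act_respects K"
  unfolding act_respects_def
proof (intro ballI impI)
  obtain act' where K: "ideal K A"
    and hom: "pring_hom k P A etaA act (A Quot K) (\<lambda>c. K +>\<^bsub>A\<^esub> etaA c) act' (\<lambda>r. K +>\<^bsub>A\<^esub> r)"
    using assms unfolding pideal_def by blast
  fix f r s assume f: "f \<in> carrier P" and rs: "r \<in> carrier A" "s \<in> carrier A"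
    and "r \<ominus>\<^bsub>A\<^esub> s \<in> K"
  then have "K +>\<^bsub>A\<^esub> r = K +>\<^bsub>A\<^esub> s"
    using A.quotient_eq_iff_same_a_r_cos[OF K rs] by blast
  then have "K +>\<^bsub>A\<^esub> act f r = K +>\<^bsub>A\<^esub> act f s"
    using hom f rs by (simp add: pring_hom_def)
  then show "act f r \<ominus>\<^bsub>A\<^esub> act f s \<in> K"
    using A.quotient_eq_iff_same_a_r_cos[OF K] f rs by simp
qed

lemma pideal_if_act_respects:
  assumes K: "ideal K A" and respects: "act_respects K"
  shows "pideal k P eta B cmp e A etaA act K"
proof -
  interpret K: ideal K A by (rule K)
  define h where "h = a_r_coset A K"
  define act' where "act' f X = h (act f (SOME r. r \<in> X))" for f X
  have h_eq_iff: "h r = h s \<longleftrightarrow> r \<ominus>\<^bsub>A\<^esub> s \<in> K" if "r \<in> carrier A" "s \<in> carrier A" for r s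
    unfolding h_def using A.quotient_eq_iff_same_a_r_cos[OF K that] by simp
  have act': "act' f (h r) = h (act f r)" if f: "f \<in> carrier P" and r: "r \<in> carrier A" for f r
  proof -
    define s where "s = (SOME s. s \<in> h r)"
    have "r \<in> h r"
      unfolding h_def using r by (rule K.a_rcos_self)
    then have "s \<in> h r"
      unfolding s_def by (rule someI)
    then have s: "s \<in> carrier A" and "h s = h r"
      unfolding h_def using K.a_elemrcos_carrier K.a_repr_independence' r by metis+
    then have "act f s \<ominus>\<^bsub>A\<^esub> act f r \<in> K"
      using respects f r h_eq_iff by (simp add: act_respects_def)
    then show ?thesis
      using f r s h_eq_iff by (simp add: act'_def s_def)
  qed
  have surj: "h ` carrier A = carrier (A Quot K)"
    by (auto simp: h_def FactRing_def A_RCOSETS_def RCOSETS_def a_r_coset_def)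
  have hom: "h \<in> ring_hom A (A Quot K)"
    unfolding h_def by (rule K.rcos_ring_hom)
  have "pring k P eta B cmp e (A Quot K) (\<lambda>c. h (etaA c)) act'"
    using K.quotient_is_cring[OF A.is_cring] hom surj act' by (rule pring_surj_image)
  moreover have "pring_hom k P A etaA act (A Quot K) (\<lambda>c. h (etaA c)) act' h"
    using hom by (simp add: pring_hom_def kalg_hom_def act')
  ultimately show ?thesis
    unfolding pideal_def h_def using K by blast
qed

lemma pideal_iff_act_respects:
  "pideal k P eta B cmp e A etaA act K \<longleftrightarrow> ideal K A \<and> act_respects K"
  using act_respects_if_pideal pideal_if_act_respects by (auto simp: pideal_def)

lemma act_add_diff_mem:
  assumes K: "ideal K A" and x: "x \<in> carrier A"
    and diff_zero: "\<And>g. g \<in> carrier P \<Longrightarrow> act g x \<ominus>\<^bsub>A\<^esub> act g \<zero>\<^bsub>A\<^esub> \<in> K"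
    and f: "f \<in> carrier P" and s: "s \<in> carrier A"
  shows "act f (s \<oplus>\<^bsub>A\<^esub> x) \<ominus>\<^bsub>A\<^esub> act f s \<in> K"
proof -
  have "act f (s \<oplus>\<^bsub>A\<^esub> x) = tensor_eval A etaA act (dplus B f) s x"
    using f s x by (rule act_add)
  moreover have "act f s = tensor_eval A etaA act (dplus B f) s \<zero>\<^bsub>A\<^esub>"
    using act_add[OF f s A.zero_closed] s by simp
  ultimately show ?thesis
    using tensor_eval_diff_right_mem[OF dplus_wf[OF f] K s x A.zero_closed diff_zero] by simp
qed

lemma act_mult_diff_zero_mem:
  assumes I: "ideal I A" and J: "ideal J A" and "act_respects I" and "act_respects J"
    and i: "i \<in> I" and j: "j \<in> J" and f: "f \<in> carrier P"
  shows "act f (i \<otimes>\<^bsub>A\<^esub> j) \<ominus>\<^bsub>A\<^esub> act f \<zero>\<^bsub>A\<^esub> \<in> I \<cdot>\<^bsub>A\<^esub> J"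
proof -
  let ?T = "tensor_eval A etaA act (dtimes B f)"
  have ij: "i \<in> carrier A" "j \<in> carrier A"
    using i j ideal.Icarr[OF I] ideal.Icarr[OF J] by auto
  have "act g i \<ominus>\<^bsub>A\<^esub> act g \<zero>\<^bsub>A\<^esub> \<in> I" "act g j \<ominus>\<^bsub>A\<^esub> act g \<zero>\<^bsub>A\<^esub> \<in> J"
    if "g \<in> carrier P" for g
    using assms that ij by (auto simp: act_respects_def A.minus_eq)
  then have "?T i j \<ominus>\<^bsub>A\<^esub> ?T i \<zero>\<^bsub>A\<^esub> \<ominus>\<^bsub>A\<^esub> (?T \<zero>\<^bsub>A\<^esub> j \<ominus>\<^bsub>A\<^esub> ?T \<zero>\<^bsub>A\<^esub> \<zero>\<^bsub>A\<^esub>) \<in> I \<cdot>\<^bsub>A\<^esub> J"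
    using ij by (intro tensor_eval_second_diff_mem[OF dtimes_wf[OF f] I J]) simp_all
  moreover have "?T i j = act f (i \<otimes>\<^bsub>A\<^esub> j)"
    and "?T i \<zero>\<^bsub>A\<^esub> = act f \<zero>\<^bsub>A\<^esub>" and "?T \<zero>\<^bsub>A\<^esub> j = act f \<zero>\<^bsub>A\<^esub>" and "?T \<zero>\<^bsub>A\<^esub> \<zero>\<^bsub>A\<^esub> = act f \<zero>\<^bsub>A\<^esub>"
    using f ij by (simp_all flip: act_mult)
  moreover have "a \<ominus>\<^bsub>A\<^esub> b \<ominus>\<^bsub>A\<^esub> (b \<ominus>\<^bsub>A\<^esub> b) = a \<ominus>\<^bsub>A\<^esub> b"
    if "a \<in> carrier A" "b \<in> carrier A" for a b
    using that by algebra
  ultimately show ?thesis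
    using f ij by simp
qed

lemma act_add_diff_mem_ideal_prod:
  assumes I: "ideal I A" and J: "ideal J A" and "act_respects I" and "act_respects J"
    and x: "x \<in> I \<cdot>\<^bsub>A\<^esub> J"
  shows "f \<in> carrier P \<Longrightarrow> s \<in> carrier A \<Longrightarrow> act f (s \<oplus>\<^bsub>A\<^esub> x) \<ominus>\<^bsub>A\<^esub> act f s \<in> I \<cdot>\<^bsub>A\<^esub> J"
  using x
proof (induction x arbitrary: f s rule: ideal_prod.induct)
  case (prod i j)
  then show ?case
    using assms A.ideal_prod_is_ideal[OF I J] ideal.Icarr[OF I] ideal.Icarr[OF J]
    by (intro act_add_diff_mem act_mult_diff_zero_mem) auto
next
  case (sum x y)
  interpret IJ: ideal "I \<cdot>\<^bsub>A\<^esub> J" A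
    by (rule A.ideal_prod_is_ideal[OF I J])
  have xy: "x \<in> carrier A" "y \<in> carrier A"
    using sum.hyps by (auto intro: IJ.Icarr)
  have "act f ((s \<oplus>\<^bsub>A\<^esub> x) \<oplus>\<^bsub>A\<^esub> y) \<ominus>\<^bsub>A\<^esub> act f (s \<oplus>\<^bsub>A\<^esub> x)
      \<oplus>\<^bsub>A\<^esub> (act f (s \<oplus>\<^bsub>A\<^esub> x) \<ominus>\<^bsub>A\<^esub> act f s) \<in> I \<cdot>\<^bsub>A\<^esub> J"
    using sum xy by (intro IJ.a_closed) simp_all
  moreover have "act f ((s \<oplus>\<^bsub>A\<^esub> x) \<oplus>\<^bsub>A\<^esub> y) \<ominus>\<^bsub>A\<^esub> act f (s \<oplus>\<^bsub>A\<^esub> x)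
      \<oplus>\<^bsub>A\<^esub> (act f (s \<oplus>\<^bsub>A\<^esub> x) \<ominus>\<^bsub>A\<^esub> act f s) = act f (s \<oplus>\<^bsub>A\<^esub> (x \<oplus>\<^bsub>A\<^esub> y)) \<ominus>\<^bsub>A\<^esub> act f s"
  proof -
    have "a \<ominus>\<^bsub>A\<^esub> b \<oplus>\<^bsub>A\<^esub> (b \<ominus>\<^bsub>A\<^esub> c) = a \<ominus>\<^bsub>A\<^esub> c"
      if "a \<in> carrier A" "b \<in> carrier A" "c \<in> carrier A" for a b c
      using that by algebra
    then show ?thesis
      using sum.prems xy by (simp add: A.a_assoc)
  qed
  ultimately show ?case
    by simp
qed

lemma act_respects_ideal_prod:
  assumes "ideal I A" and "ideal J A" and "act_respects I" and "act_respects J"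
  shows "act_respects (I \<cdot>\<^bsub>A\<^esub> J)"
  unfolding act_respects_def
proof (intro ballI impI)
  fix f r s assume "f \<in> carrier P" "r \<in> carrier A" "s \<in> carrier A" "r \<ominus>\<^bsub>A\<^esub> s \<in> I \<cdot>\<^bsub>A\<^esub> J"
  moreover have "r = s \<oplus>\<^bsub>A\<^esub> (r \<ominus>\<^bsub>A\<^esub> s)"
    using \<open>r \<in> carrier A\<close> \<open>s \<in> carrier A\<close> by algebra
  ultimately show "act f r \<ominus>\<^bsub>A\<^esub> act f s \<in> I \<cdot>\<^bsub>A\<^esub> J"
    using act_add_diff_mem_ideal_prod[OF assms] by metis
qed

end

theorem proposition5p7:
  fixes k :: "'k ring" and P :: "'p ring" and eta :: "'k \<Rightarrow> 'p"
    and B :: "('k, 'p) biring_data" and cmp :: "'p \<Rightarrow> 'p \<Rightarrow> 'p" and e :: 'p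
    and A :: "'a ring" and etaA :: "'k \<Rightarrow> 'a" and act :: "'p \<Rightarrow> 'a \<Rightarrow> 'a"
    and I J :: "'a set"
  assumes "cring k"
    and "plethory k P eta B cmp e"
    and "pring k P eta B cmp e A etaA act"
    and "pideal k P eta B cmp e A etaA act I"
    and "pideal k P eta B cmp e A etaA act J"
  shows "pideal k P eta B cmp e A etaA act (I \<cdot>\<^bsub>A\<^esub> J)"
proof -
  interpret pring_over_plethory k P eta B cmp e A etaA act
    using assms(2,3) by unfold_locales
  have "ideal I A" "act_respects I" "ideal J A" "act_respects J"
    using assms(4,5) by (simp_all add: pideal_iff_act_respects)
  then show ?thesis
    using A.ideal_prod_is_ideal act_respects_ideal_prod by (simp add: pideal_iff_act_respects)
qed

end
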